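(* In partially synchronous Streamlet with $n$ validators, if there is a safety violation (two conflicting blocks are both finalized), then one can identify at least $n/3$ validators each of which has violated one of the Streamlet slashing conditions.
   Context: Streamlet: time is divided into epochs, each with a leader. The leader of epoch $e$ proposes a block extending one of the longest notarized chains it has seen; a validator votes (at most once per epoch) for the leader's proposal if it extends one of the longest notarized chains the validator has seen. A block is notarized once it has votes from at least $2n/3$ validators. If a notarized chain contains three adjacent blocks from consecutive epochs $e-1,e,e+1$, then the block of epoch $e$ and its prefix are finalized. For a block $B$, $e_B$ denotes its epoch and $|B|$ its depth (height in the chain). Streamlet slashing conditions: a validator violates a slashing condition if (1) it votes for two blocks $B_1,B_2$ with $e_{B_1}=e_{B_2}$, or (2) it votes for $B_1,B_2$ with $e_{B_1}<e_{B_2}$ but $|B_1|>|B_2|$. *)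

theory Defs
  imports Complex_Main "HOL-Library.Sublist"
begin

text \<open>A block is identified by its whole chain back to genesis (as a real block
  contains the hash of its parent): it is the list of (epoch, payload) entries of the
  non-genesis blocks of its chain, oldest first.\<close>

type_synonym 'p block = "(nat \<times> 'p) list"

definition genesis :: "'p block" where
  "genesis = []"

definition parent :: "'p block \<Rightarrow> 'p block" where
  "parent B = butlast B"

definition epoch :: "'p block \<Rightarrow> nat" where
  "epoch B = (if B = [] then 0 else fst (last B))"

definition depth :: "'p block \<Rightarrow> nat" where
  "depth B = length B"

definition valid_block :: "'p block \<Rightarrow> bool" where
  "valid_block B \<longleftrightarrow> (\<forall>x \<in> set B. 0 < fst x)"

definition extends :: "'p block \<Rightarrow> 'p block \<Rightarrow> bool" where
  "extends B A \<longleftrightarrow> prefix A B"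

definition conflicting :: "'p block \<Rightarrow> 'p block \<Rightarrow> bool" where
  "conflicting A B \<longleftrightarrow> \<not> extends A B \<and> \<not> extends B A"

definition notarized :: "'v set \<Rightarrow> ('v \<times> 'p block) set \<Rightarrow> 'p block \<Rightarrow> bool" where
  "notarized V votes B \<longleftrightarrow>
     B = genesis \<or>
     (valid_block B \<and> real (card {v \<in> V. (v, B) \<in> votes}) \<ge> 2 * real (card V) / 3)"

definition notarized_chain :: "'v set \<Rightarrow> ('v \<times> 'p block) set \<Rightarrow> 'p block \<Rightarrow> bool" where
  "notarized_chain V votes B \<longleftrightarrow> (\<forall>A. extends B A \<longrightarrow> notarized V votes A)"

definition finalized :: "'v set \<Rightarrow> ('v \<times> 'p block) set \<Rightarrow> 'p block \<Rightarrow> bool" where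
  "finalized V votes B \<longleftrightarrow>
     (\<exists>B1 B2. extends B1 B \<and> B1 \<noteq> genesis \<and> parent B2 = B1 \<and> B2 \<noteq> genesis \<and>
        notarized_chain V votes B2 \<and>
        epoch (parent B1) + 1 = epoch B1 \<and> epoch B1 + 1 = epoch B2)"

definition safety_violation :: "'v set \<Rightarrow> ('v \<times> 'p block) set \<Rightarrow> bool" where
  "safety_violation V votes \<longleftrightarrow>
     (\<exists>B B'. finalized V votes B \<and> finalized V votes B' \<and> conflicting B B')"

definition violates_slashing :: "('v \<times> 'p block) set \<Rightarrow> 'v \<Rightarrow> bool" where
  "violates_slashing votes v \<longleftrightarrow>
     (\<exists>B1 B2. (v, B1) \<in> votes \<and> (v, B2) \<in> votes \<and> B1 \<noteq> B2 \<and> epoch B1 = epoch B2) \<or>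
     (\<exists>B1 B2. (v, B1) \<in> votes \<and> (v, B2) \<in> votes \<and> epoch B1 < epoch B2 \<and> depth B1 > depth B2)"

end

theory Submission
  imports Defs
begin

text \<open>If two notarized blocks form a slashable pair, their quorums of 2n/3 validators share at
  least n/3 validators, each of which voted for both. Otherwise notarized blocks of distinct
  epochs have distinct depths, ordered like their epochs, and an induction along any notarized
  chain shows that each of its blocks whose epoch is at least the epoch e of a finalized
  block B1 extends B1: a chain leaving the notarized blocks of epochs e - 1, e, e + 1 would
  have to skip a depth. So finalized blocks never conflict.\<close>

definition slashable_pair :: "'p block \<Rightarrow> 'p block \<Rightarrow> bool" where
  "slashable_pair X Y \<longleftrightarrow>
     (X \<noteq> Y \<and> epoch X = epoch Y) \<or> (epoch X < epoch Y \<and> depth X > depth Y)"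

lemma violates_slashing_iff:
  "violates_slashing votes v \<longleftrightarrow>
     (\<exists>X Y. (v, X) \<in> votes \<and> (v, Y) \<in> votes \<and> slashable_pair X Y)"
  unfolding violates_slashing_def slashable_pair_def by blast

lemma quorum_intersection:
  assumes "finite V" "A \<subseteq> V" "B \<subseteq> V"
    and "2 * real (card V) / 3 \<le> real (card A)" "2 * real (card V) / 3 \<le> real (card B)"
  shows "real (card V) / 3 \<le> real (card (A \<inter> B))"
proof -
  have "finite A" "finite B" using assms(1-3) finite_subset by blast+
  then have "card (A \<union> B) + card (A \<inter> B) = card A + card B" by (rule card_Un_Int[symmetric])
  moreover have "card (A \<union> B) \<le> card V" using assms(1-3) by (intro card_mono) auto
  ultimately have "real (card A) + real (card B) \<le> real (card V) + real (card (A \<inter> B))"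
    by (metis add_le_mono1 of_nat_add of_nat_le_iff)
  then show ?thesis using assms(4,5) by linarith
qed

lemma epoch_snoc [simp]: "epoch (B @ [x]) = fst x"
  by (simp add: epoch_def)

lemma notarized_chain_prefix:
  "notarized_chain V votes B \<Longrightarrow> prefix A B \<Longrightarrow> notarized_chain V votes A"
  unfolding notarized_chain_def extends_def by (meson prefix_order.trans)

lemma notarized_chain_notarized: "notarized_chain V votes B \<Longrightarrow> notarized V votes B"
  by (simp add: notarized_chain_def extends_def)

lemma notarized_epoch_pos: "notarized V votes B \<Longrightarrow> B \<noteq> genesis \<Longrightarrow> 0 < epoch B"
  unfolding notarized_def genesis_def valid_block_def epoch_def by auto

lemma notarized_quorum:
  "notarized V votes B \<Longrightarrow> B \<noteq> genesis \<Longrightarrow>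
     2 * real (card V) / 3 \<le> real (card {v \<in> V. (v, B) \<in> votes})"
  unfolding notarized_def by simp

lemma slashable_pair_notarized_non_genesis:
  assumes "notarized V votes X" "notarized V votes Y" "slashable_pair X Y"
  shows "X \<noteq> genesis" "Y \<noteq> genesis"
  using assms notarized_epoch_pos[OF assms(1)] notarized_epoch_pos[OF assms(2)]
  by (auto simp: slashable_pair_def genesis_def epoch_def depth_def)

lemma slashable_pair_notarized_slashes_third:
  assumes "finite V" "notarized V votes X" "notarized V votes Y" "slashable_pair X Y"
  shows "\<exists>S \<subseteq> V. real (card V) / 3 \<le> real (card S) \<and> (\<forall>v \<in> S. violates_slashing votes v)"
proof (intro exI conjI)
  let ?S = "{v \<in> V. (v, X) \<in> votes} \<inter> {v \<in> V. (v, Y) \<in> votes}"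
  show "?S \<subseteq> V" by blast
  show "real (card V) / 3 \<le> real (card ?S)"
    using assms slashable_pair_notarized_non_genesis[OF assms(2-4)]
    by (intro quorum_intersection notarized_quorum) auto
  show "\<forall>v \<in> ?S. violates_slashing votes v"
    unfolding violates_slashing_iff using assms(4) by blast
qed

definition consistent_notarization :: "'v set \<Rightarrow> ('v \<times> 'p block) set \<Rightarrow> bool" where
  "consistent_notarization V votes \<longleftrightarrow>
     (\<forall>X Y. notarized V votes X \<longrightarrow> notarized V votes Y \<longrightarrow> \<not> slashable_pair X Y)"

lemma consistent_epoch_inj:
  "consistent_notarization V votes \<Longrightarrow> notarized V votes X \<Longrightarrow> notarized V votes Y \<Longrightarrow>
     epoch X = epoch Y \<Longrightarrow> X = Y"
  unfolding consistent_notarization_def slashable_pair_def by blast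

lemma consistent_depth_mono:
  "consistent_notarization V votes \<Longrightarrow> notarized V votes X \<Longrightarrow> notarized V votes Y \<Longrightarrow>
     epoch X \<le> epoch Y \<Longrightarrow> depth X \<le> depth Y"
  unfolding consistent_notarization_def slashable_pair_def by (metis le_eq_less_or_eq not_le_imp_less)

definition finalizing :: "'v set \<Rightarrow> ('v \<times> 'p block) set \<Rightarrow> 'p block \<Rightarrow> bool" where
  "finalizing V votes B1 \<longleftrightarrow> B1 \<noteq> genesis \<and>
     (\<exists>B2. parent B2 = B1 \<and> B2 \<noteq> genesis \<and> notarized_chain V votes B2 \<and>
        epoch (parent B1) + 1 = epoch B1 \<and> epoch B1 + 1 = epoch B2)"

lemma finalized_iff_finalizing:
  "finalized V votes B \<longleftrightarrow> (\<exists>B1. extends B1 B \<and> finalizing V votes B1)"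
  unfolding finalized_def finalizing_def by blast

lemma finalizingE:
  assumes "finalizing V votes B1"
  obtains x where "B1 \<noteq> []" "notarized_chain V votes (B1 @ [x])"
    "epoch (butlast B1) + 1 = epoch B1" "epoch B1 + 1 = fst x"
proof -
  obtain B2 where B2: "parent B2 = B1" "B2 \<noteq> []" "notarized_chain V votes B2"
    "epoch (butlast B1) + 1 = epoch B1" "epoch B1 + 1 = epoch B2" "B1 \<noteq> []"
    using assms unfolding finalizing_def genesis_def parent_def by blast
  have "B2 = B1 @ [last B2]"
    using append_butlast_last_id[OF \<open>B2 \<noteq> []\<close>] \<open>parent B2 = B1\<close> by (simp add: parent_def)
  with B2 show thesis using that by (metis epoch_snoc)
qed

lemma finalizing_notarized_chain: "finalizing V votes B1 \<Longrightarrow> notarized_chain V votes B1"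
  by (metis finalizingE notarized_chain_prefix prefixI)

lemma consistent_notarized_chain_extends_finalizing:
  assumes cons: "consistent_notarization V votes" and fin: "finalizing V votes B1"
    and "notarized_chain V votes C" and "epoch B1 \<le> epoch C"
  shows "prefix B1 C"
  using assms(3,4)
proof (induction C rule: rev_induct)
  case Nil
  have "0 < epoch B1"
    using fin notarized_epoch_pos notarized_chain_notarized[OF finalizing_notarized_chain[OF fin]]
    unfolding finalizing_def by blast
  with Nil show ?case by (simp add: epoch_def)
next
  case (snoc c P)
  obtain x where "B1 \<noteq> []" and chain2: "notarized_chain V votes (B1 @ [x])"
    and e1: "epoch (butlast B1) + 1 = epoch B1" and e2: "epoch B1 + 1 = fst x"
    using fin by (rule finalizingE)
  let ?B0 = "butlast B1" and ?B2 = "B1 @ [x]"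
  have chain1: "notarized_chain V votes B1" using fin by (rule finalizing_notarized_chain)
  have chainP: "notarized_chain V votes P" using snoc.prems(1) by (rule notarized_chain_prefix) simp
  have notar: "notarized V votes ?B0" "notarized V votes B1" "notarized V votes ?B2"
      "notarized V votes P" "notarized V votes (P @ [c])"
    using chain1 chain2 chainP snoc.prems(1)
    by (auto intro: notarized_chain_notarized notarized_chain_prefix[OF chain1 prefixeq_butlast])
  show ?case
  proof (cases "epoch B1 \<le> epoch P")
    case True
    then show ?thesis using snoc.IH chainP by simp
  next
    case P_early: False
    consider "fst c = epoch B1" | "fst c = fst x" | "fst x < fst c"
      using snoc.prems(2) e2 by fastforce
    then show ?thesis
    proof cases
      case 1
      then show ?thesis using consistent_epoch_inj[OF cons notar(5,2)] by simp
    next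
      case 2
      then have "P @ [c] = ?B2" using consistent_epoch_inj[OF cons notar(5,3)] by simp
      then show ?thesis by simp
    next
      case 3
      \<comment> \<open>then P @ [c] would skip depth |B1|: |P| \<le> |B0| but |P @ [c]| \<ge> |B2|\<close>
      have "depth P \<le> depth ?B0"
        using P_early e1 by (intro consistent_depth_mono[OF cons notar(4,1)]) linarith
      moreover have "depth ?B2 \<le> depth (P @ [c])"
        using 3 by (intro consistent_depth_mono[OF cons notar(3,5)]) simp
      moreover have "depth ?B0 + 1 = depth B1" using \<open>B1 \<noteq> []\<close> by (simp add: depth_def)
      moreover have "depth ?B2 = depth B1 + 1" "depth (P @ [c]) = depth P + 1"
        by (simp_all add: depth_def)
      ultimately have False by linarith
      then show ?thesis ..
    qed
  qed
qed

lemma consistent_finalizing_comparable: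
  assumes "consistent_notarization V votes" "finalizing V votes B1" "finalizing V votes B1'"
  shows "prefix B1 B1' \<or> prefix B1' B1"
proof -
  note extends_finalizing = consistent_notarized_chain_extends_finalizing[OF assms(1)]
  show ?thesis
    using extends_finalizing[OF assms(2) finalizing_notarized_chain[OF assms(3)]]
      extends_finalizing[OF assms(3) finalizing_notarized_chain[OF assms(2)]]
    by linarith
qed

theorem consistent_no_safety_violation:
  assumes "consistent_notarization V votes"
  shows "\<not> safety_violation V votes"
proof
  assume "safety_violation V votes"
  then obtain B B' B1 B1' where "prefix B B1" "prefix B' B1'" "conflicting B B'"
    "finalizing V votes B1" "finalizing V votes B1'"
    unfolding safety_violation_def finalized_iff_finalizing extends_def by blast
  moreover from this have "prefix B1 B1' \<or> prefix B1' B1"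
    using assms consistent_finalizing_comparable by blast
  ultimately have "prefix B B' \<or> prefix B' B"
    by (meson prefix_order.trans prefix_same_cases)
  then show False using \<open>conflicting B B'\<close> by (simp add: conflicting_def extends_def)
qed

theorem lemma1:
  fixes V :: "'v set" and votes :: "('v \<times> 'p block) set"
  assumes "finite V"
    and "safety_violation V votes"
  shows "\<exists>S \<subseteq> V. real (card S) \<ge> real (card V) / 3 \<and> (\<forall>v \<in> S. violates_slashing votes v)"
proof -
  have "\<not> consistent_notarization V votes" using assms(2) consistent_no_safety_violation by blast
  then obtain X Y where "notarized V votes X" "notarized V votes Y" "slashable_pair X Y"
    unfolding consistent_notarization_def by blast
  then show ?thesis using assms(1) slashable_pair_notarized_slashes_third by blast
qed

end
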